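(* Let $m=2^l m_1$ with $l\ge0$ and $m_1$ odd (and $m\ge2$). Then $L_m(3)=l$.
   Context: The Ducci function $D:\mathbb{Z}_m^3\to\mathbb{Z}_m^3$ is $D(x_1,x_2,x_3)=(x_1+x_2,\,x_2+x_3,\,x_3+x_1)$, entries mod $m$. For $\mathbf{u}\in\mathbb{Z}_m^3$, $\mathrm{Len}(\mathbf{u})$ is the smallest $j\ge0$ such that $D^{j+k}(\mathbf{u})=D^j(\mathbf{u})$ for some $k\ge1$, and $L_m(3)=\mathrm{Len}(0,0,1)$. *)

theory Defs
  imports Main
begin

type_synonym triple = "nat \<times> nat \<times> nat"

definition ducci :: "nat \<Rightarrow> triple \<Rightarrow> triple" where
  "ducci m u = (case u of (x1, x2, x3) \<Rightarrow>
      ((x1 + x2) mod m, (x2 + x3) mod m, (x3 + x1) mod m))"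

definition ducci_len :: "nat \<Rightarrow> triple \<Rightarrow> nat" where
  "ducci_len m u = (LEAST j. \<exists>k\<ge>1. (ducci m ^^ (j + k)) u = (ducci m ^^ j) u)"

definition L3 :: "nat \<Rightarrow> nat" where
  "L3 m = ducci_len m (0, 0, 1)"

end

theory Submission
  imports Defs "HOL-Number_Theory.Number_Theory"
begin

text \<open>
  The coordinate sum doubles under the Ducci map, so along the orbit of (0,0,1) it is \<open>2^n\<close>
  modulo \<open>m\<close>; periodicity from step \<open>j\<close> on then forces \<open>2^l\<close> to divide \<open>2^j (2^k - 1)\<close>,
  i.e. \<open>l \<le> j\<close>.  Conversely, on unreduced triples of naturals, six Ducci steps add \<open>21\<close> times the
  coordinate sum to every entry, so \<open>6q\<close> steps add a constant \<open>c\<close> with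
  \<open>3c = (64^q - 1) s\<close>.  After \<open>l\<close> steps the sum \<open>s\<close> is divisible by \<open>2^l\<close>, and choosing
  \<open>q\<close> with \<open>64^q \<equiv> 1 (mod 3 m\<^sub>1)\<close> makes \<open>c\<close> a multiple of \<open>m\<close>, so the orbit is periodic
  from step \<open>l\<close> on.
\<close>

definition ducci_nat :: "triple \<Rightarrow> triple" where
  "ducci_nat u = (case u of (x1, x2, x3) \<Rightarrow> (x1 + x2, x2 + x3, x3 + x1))"

definition triple_mod :: "nat \<Rightarrow> triple \<Rightarrow> triple" where
  "triple_mod m u = (case u of (x1, x2, x3) \<Rightarrow> (x1 mod m, x2 mod m, x3 mod m))"

definition triple_sum :: "triple \<Rightarrow> nat" where
  "triple_sum u = (case u of (x1, x2, x3) \<Rightarrow> x1 + x2 + x3)"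

definition triple_shift :: "nat \<Rightarrow> triple \<Rightarrow> triple" where
  "triple_shift c u = (case u of (x1, x2, x3) \<Rightarrow> (x1 + c, x2 + c, x3 + c))"

lemma triple_sum_ducci_cong: "[triple_sum (ducci m u) = 2 * triple_sum u] (mod m)"
proof (cases u)
  case (fields a b c)
  have "[(a + b) mod m + (b + c) mod m + (c + a) mod m = (a + b) + (b + c) + (c + a)] (mod m)"
    by (intro cong_add) (simp_all add: cong_def)
  also have "(a + b) + (b + c) + (c + a) = 2 * (a + b + c)"
    by simp
  finally show ?thesis
    by (simp add: fields ducci_def triple_sum_def)
qed

lemma triple_sum_funpow_ducci_cong:
  "[triple_sum ((ducci m ^^ n) u) = 2 ^ n * triple_sum u] (mod m)"
proof (induction n)
  case 0
  then show ?case by simp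
next
  case (Suc n)
  have "[triple_sum ((ducci m ^^ Suc n) u) = 2 * triple_sum ((ducci m ^^ n) u)] (mod m)"
    using triple_sum_ducci_cong by simp
  also have "[2 * triple_sum ((ducci m ^^ n) u) = 2 * (2 ^ n * triple_sum u)] (mod m)"
    using Suc.IH by (rule cong_scalar_left)
  finally show ?case by (simp add: mult.assoc)
qed

lemma pow2_cong_imp_le:
  fixes l m1 j k :: nat
  assumes "[2 ^ (j + k) = 2 ^ j] (mod 2 ^ l * m1)" and "k \<ge> 1"
  shows "l \<le> j"
proof -
  have "(2::nat) ^ (j + k) - 2 ^ j = 2 ^ j * (2 ^ k - 1)"
    by (simp add: power_add diff_mult_distrib2)
  moreover have "2 ^ l * m1 dvd (2::nat) ^ (j + k) - 2 ^ j"
    using assms(1) by (simp add: cong_altdef_nat power_increasing)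
  ultimately have "2 ^ l dvd (2::nat) ^ j * (2 ^ k - 1)"
    by (metis dvd_mult_left)
  moreover have "coprime ((2::nat) ^ l) (2 ^ k - 1)"
    using assms(2) by simp
  ultimately have "(2::nat) ^ l dvd 2 ^ j"
    using coprime_dvd_mult_left_iff by blast
  then show ?thesis
    using power_dvd_imp_le by fastforce
qed

lemma ducci_period_start_ge:
  assumes "m = 2 ^ l * m1" and "k \<ge> 1"
    and "(ducci m ^^ (j + k)) (0, 0, 1) = (ducci m ^^ j) (0, 0, 1)"
  shows "l \<le> j"
proof (rule pow2_cong_imp_le[OF _ assms(2)])
  have "[2 ^ (j + k) = triple_sum ((ducci m ^^ (j + k)) (0, 0, 1))] (mod m)"
    using triple_sum_funpow_ducci_cong[where m = m and n = "j + k" and u = "(0, 0, 1)"]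
    by (simp add: triple_sum_def cong_sym)
  also have "[triple_sum ((ducci m ^^ (j + k)) (0, 0, 1)) = 2 ^ j] (mod m)"
    using triple_sum_funpow_ducci_cong[where m = m and n = j and u = "(0, 0, 1)"] assms(3)
    by (simp add: triple_sum_def)
  finally show "[2 ^ (j + k) = 2 ^ j] (mod 2 ^ l * m1)"
    using assms(1) by simp
qed

lemma ducci_triple_mod: "ducci m (triple_mod m u) = triple_mod m (ducci_nat u)"
  by (cases u) (simp add: ducci_def triple_mod_def ducci_nat_def mod_add_eq)

lemma funpow_ducci_triple_mod:
  "(ducci m ^^ n) (triple_mod m u) = triple_mod m ((ducci_nat ^^ n) u)"
  by (induction n) (simp_all add: ducci_triple_mod)

lemma triple_sum_ducci_nat: "triple_sum (ducci_nat u) = 2 * triple_sum u"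
  by (cases u) (simp add: triple_sum_def ducci_nat_def)

lemma triple_sum_funpow_ducci_nat: "triple_sum ((ducci_nat ^^ n) u) = 2 ^ n * triple_sum u"
  by (induction n) (simp_all add: triple_sum_ducci_nat)

lemma funpow6_ducci_nat: "(ducci_nat ^^ 6) u = triple_shift (21 * triple_sum u) u"
  by (cases u) (simp add: ducci_nat_def triple_shift_def triple_sum_def numeral_eq_Suc)

lemma triple_sum_triple_shift: "triple_sum (triple_shift c u) = triple_sum u + 3 * c"
  by (cases u) (simp add: triple_sum_def triple_shift_def)

lemma triple_shift_add: "triple_shift c (triple_shift d u) = triple_shift (d + c) u"
  by (cases u) (simp add: triple_shift_def)

lemma funpow_mult6_ducci_nat:
  "\<exists>c. (ducci_nat ^^ (6 * q)) u = triple_shift c u \<and> 3 * c + triple_sum u = 64 ^ q * triple_sum u"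
proof (induction q)
  case 0
  have "triple_shift 0 u = u" by (cases u) (simp add: triple_shift_def)
  then show ?case by (intro exI[of _ 0]) simp
next
  case (Suc q)
  then obtain c where c: "(ducci_nat ^^ (6 * q)) u = triple_shift c u"
    and sum_c: "3 * c + triple_sum u = 64 ^ q * triple_sum u"
    by blast
  let ?c' = "c + 21 * (triple_sum u + 3 * c)"
  have "(ducci_nat ^^ (6 * Suc q)) u = (ducci_nat ^^ 6) ((ducci_nat ^^ (6 * q)) u)"
    by (simp add: funpow_add)
  also have "\<dots> = triple_shift ?c' u"
    by (simp add: c funpow6_ducci_nat triple_sum_triple_shift triple_shift_add)
  finally show ?case
    using sum_c by (intro exI[of _ ?c']) simp
qed

lemma triple_mod_triple_shift:
  assumes "m dvd c"
  shows "triple_mod m (triple_shift c u) = triple_mod m u"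
  using assms by (cases u) (auto simp: triple_mod_def triple_shift_def elim!: dvdE)

lemma exists_pow_cong_1:
  fixes a n :: nat
  assumes "coprime a n" and "n > 0"
  shows "\<exists>q\<ge>1. [a ^ q = 1] (mod n)"
  using euler_theorem[OF assms(1)] assms(2) by (intro exI[of _ "totient n"]) (simp add: Suc_leI)

lemma odd_imp_dvd_pow64_minus_1:
  fixes n :: nat
  assumes "odd n"
  shows "\<exists>q\<ge>1. 3 * n dvd 64 ^ q - 1"
proof -
  have "coprime (2::nat) (3 * n)"
    using assms by simp
  then have "coprime ((2::nat) ^ 6) (3 * n)"
    by (simp only: coprime_power_left_iff simp_thms)
  then obtain q where "q \<ge> 1" and "[64 ^ q = 1] (mod 3 * n)"
    using exists_pow_cong_1 assms by (fastforce simp: odd_pos)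
  then show ?thesis
    using cong_to_1_nat by blast
qed

lemma ducci_periodic_from:
  assumes "m = 2 ^ l * m1" and "odd m1"
  shows "\<exists>k\<ge>1. (ducci m ^^ (l + k)) (triple_mod m u) = (ducci m ^^ l) (triple_mod m u)"
proof -
  obtain q where "q \<ge> 1" and "3 * m1 dvd 64 ^ q - 1"
    using odd_imp_dvd_pow64_minus_1[OF assms(2)] by blast
  define v where "v = (ducci_nat ^^ l) u"
  obtain c where shift: "(ducci_nat ^^ (6 * q)) v = triple_shift c v"
    and "3 * c + triple_sum v = 64 ^ q * triple_sum v"
    using funpow_mult6_ducci_nat by blast
  then have "3 * c = (64 ^ q - 1) * 2 ^ l * triple_sum u"
    by (simp add: v_def triple_sum_funpow_ducci_nat diff_mult_distrib)
  then have "3 * m dvd 3 * c"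
    using \<open>3 * m1 dvd 64 ^ q - 1\<close> assms(1) by (simp add: mult_dvd_mono mult.assoc)
  then have "m dvd c"
    by simp
  have "(ducci_nat ^^ (l + 6 * q)) u = (ducci_nat ^^ (6 * q)) v"
    by (simp add: v_def funpow_add add.commute[of l])
  also have "\<dots> = triple_shift c v"
    by (rule shift)
  finally have "(ducci_nat ^^ (l + 6 * q)) u = triple_shift c v" .
  then have "(ducci m ^^ (l + 6 * q)) (triple_mod m u) = (ducci m ^^ l) (triple_mod m u)"
    using \<open>m dvd c\<close> by (simp add: funpow_ducci_triple_mod triple_mod_triple_shift v_def)
  then show ?thesis
    using \<open>q \<ge> 1\<close> by (intro exI[of _ "6 * q"]) simp
qed

theorem theorem4p1:
  fixes m l m1 :: nat
  assumes "m \<ge> 2" and "m = 2 ^ l * m1" and "odd m1"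
  shows "L3 m = l"
proof -
  have start: "triple_mod m (0, 0, 1) = (0, 0, 1)"
    using assms(1) by (simp add: triple_mod_def)
  show ?thesis
    unfolding L3_def ducci_len_def
  proof (rule Least_equality)
    show "\<exists>k\<ge>1. (ducci m ^^ (l + k)) (0, 0, 1) = (ducci m ^^ l) (0, 0, 1)"
      using ducci_periodic_from[OF assms(2,3), of "(0, 0, 1)"] by (simp only: start)
    show "l \<le> j" if "\<exists>k\<ge>1. (ducci m ^^ (j + k)) (0, 0, 1) = (ducci m ^^ j) (0, 0, 1)" for j
      using that ducci_period_start_ge[OF assms(2)] by blast
  qed
qed

end
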